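(* Fix integers $h,w\ge2$. There exists an integer $r\ge1$ such that the following holds with $n=2hwr$: if for some integer $k\ge1$ there is a function $g:\{1,2,\dots,2h\}^k\to\{-1,+1\}^h$ satisfying $$\mathbb P_{S\sim\mathcal U_{k,n}}\big[\|g(f_S(z,h,w,r))-z\|_1\le h/4\big]\ge6/7\quad\text{for all }z\in\{-1,+1\}^h,$$ then $k\ge c\,h w^2$ for an absolute constant $c>0$ (i.e., $k=\Omega(hw^2)$).
   Context: Camouflaged populations: for integers $h,w,r\ge2$ (here $r\ge1$) and $z\in\{-1,+1\}^h$, let $n=2hwr$ and choose a partition $(A_1,\dots,A_{2h})$ of $[n]$ with $|A_{2j}|=r(w+z_j)$ and $|A_{2j-1}|=r(w-z_j)$ for each $j\in[h]$; define the feature $f(z,h,w,r):[n]\to\{1,\dots,2h\}$ by $f_i(z,h,w,r)=j$ for $i\in A_j$. For a panel $S=\{i_1,\dots,i_k\}$ (listed in some fixed order), $f_S(z,h,w,r)=(f_{i_1}(z,h,w,r),\dots,f_{i_k}(z,h,w,r))$. $\mathcal U_{k,n}$ is the uniform distribution over size-$k$ subsets of $[n]$. *)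

theory Defs
  imports Complex_Main "HOL-Library.FuncSet"
begin

definition signvecs :: "nat \<Rightarrow> (nat \<Rightarrow> int) set" where
  "signvecs h = ({1..h} \<rightarrow>\<^sub>E {-1, 1})"

definition block_size :: "(nat \<Rightarrow> int) \<Rightarrow> nat \<Rightarrow> nat \<Rightarrow> nat \<Rightarrow> nat" where
  "block_size z w r j =
     (if even j then nat (int r * (int w + z (j div 2)))
      else nat (int r * (int w - z ((j + 1) div 2))))"

text \<open>The (canonical) partition: A_1, A_2, ..., A_{2h} are consecutive blocks of [n] = {1..n},
  in this order. The feature of element i is the index j of the block containing it.\<close>
definition feature :: "(nat \<Rightarrow> int) \<Rightarrow> nat \<Rightarrow> nat \<Rightarrow> nat \<Rightarrow> nat \<Rightarrow> nat" where
  "feature z h w r i = (LEAST j. i \<le> (\<Sum>l=1..j. block_size z w r l))"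

definition feature_panel :: "(nat \<Rightarrow> int) \<Rightarrow> nat \<Rightarrow> nat \<Rightarrow> nat \<Rightarrow> nat set \<Rightarrow> nat list" where
  "feature_panel z h w r S = map (feature z h w r) (sorted_list_of_set S)"

definition unif_prob :: "nat \<Rightarrow> nat \<Rightarrow> (nat set \<Rightarrow> bool) \<Rightarrow> real" where
  "unif_prob k n P = real (card {S. S \<subseteq> {1..n} \<and> card S = k \<and> P S}) / real (n choose k)"

end

theory Submission
  imports Defs "HOL-Library.Multiset" "HOL-Combinatorics.Transposition"
begin

text \<open>
  Take \<open>r = h w\<^sup>2\<close> and suppose \<open>k < h w\<^sup>2 / 1000\<close>. Fix a coordinate \<open>j\<close> and a sign vector
  \<open>z\<close>, and let \<open>z'\<close> be \<open>z\<close> with \<open>z\<^sub>j\<close> flipped: the two populations differ only in that the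
  adjacent blocks \<open>A\<^bsub>2j-1\<^esub>\<close> and \<open>A\<^bsub>2j\<^esub>\<close> exchange their sizes \<open>r(w - 1)\<close> and \<open>r(w + 1)\<close>.
  The panel of a sample depends only on its part outside these two blocks and on the numbers
  \<open>c\<^sub>1\<close>, \<open>c\<^sub>2\<close> of its points in each of them. Group the samples by these data. A group
  under \<open>z\<close> and the group with the same data under \<open>z'\<close> show \<open>g\<close> the same panel, so on one
  of them \<open>g\<close> errs in coordinate \<open>j\<close>; their sizes are \<open>(a choose c\<^sub>1) (b choose c\<^sub>2)\<close> and
  \<open>(b choose c\<^sub>1) (a choose c\<^sub>2)\<close> with \<open>{a, b} = {r(w - 1), r(w + 1)}\<close>, and their ratio is
  at least \<open>3/4\<close> when \<open>12 |c\<^sub>1 - c\<^sub>2| \<le> w\<close>. A second moment bound shows that all but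
  \<open>29/200\<close> of the samples are balanced in this sense, so the errors in coordinate \<open>j\<close> for
  \<open>z\<close> and for \<open>z'\<close> together cover at least \<open>16/25\<close> of all samples. Averaging over \<open>z\<close>
  and \<open>j\<close> yields a population with mean Hamming error at least \<open>8h/25\<close>, whereas
  \<open>6/7\<close>-accuracy bounds it by \<open>15h/56\<close>.
\<close>

section \<open>Counting subsets\<close>

lemma card_subsets_containing:
  assumes "finite A" "B \<subseteq> A" "card B \<le> k"
  shows "card {S. S \<subseteq> A \<and> card S = k \<and> B \<subseteq> S} = (card A - card B) choose (k - card B)"
proof -
  have fin: "finite T" if "T \<subseteq> A" for T using assms(1) that finite_subset by blast
  have "bij_betw (\<lambda>T. T \<union> B) {T. T \<subseteq> A - B \<and> card T = k - card B}
          {S. S \<subseteq> A \<and> card S = k \<and> B \<subseteq> S}"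
  proof (rule bij_betw_byWitness[where f' = "\<lambda>S. S - B"])
    show "(\<lambda>T. T \<union> B) ` {T. T \<subseteq> A - B \<and> card T = k - card B} \<subseteq> {S. S \<subseteq> A \<and> card S = k \<and> B \<subseteq> S}"
    proof (rule image_subsetI)
      fix T assume "T \<in> {T. T \<subseteq> A - B \<and> card T = k - card B}"
      then have "T \<subseteq> A" "T \<inter> B = {}" "card T = k - card B" by auto
      then show "T \<union> B \<in> {S. S \<subseteq> A \<and> card S = k \<and> B \<subseteq> S}"
        using assms fin by (auto simp: card_Un_disjoint)
    qed
    show "(\<lambda>S. S - B) ` {S. S \<subseteq> A \<and> card S = k \<and> B \<subseteq> S} \<subseteq> {T. T \<subseteq> A - B \<and> card T = k - card B}"
      using assms fin by (auto simp: card_Diff_subset)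
  qed auto
  then have "card {S. S \<subseteq> A \<and> card S = k \<and> B \<subseteq> S} = card (A - B) choose (k - card B)"
    using assms by (simp add: bij_betw_same_card[symmetric] n_subsets)
  with assms fin show ?thesis by (simp add: card_Diff_subset)
qed

lemma times_binomial_minus2_eq:
  assumes "2 \<le> k"
  shows "k * (k - 1) * (n choose k) = n * (n - 1) * ((n - 2) choose (k - 2))"
proof -
  have "k * (n choose k) = n * ((n - 1) choose (k - 1))"
    using assms by (simp add: times_binomial_minus1_eq)
  moreover have "(k - 1) * ((n - 1) choose (k - 1)) = (n - 1) * ((n - 2) choose (k - 2))"
    using assms times_binomial_minus1_eq[of "k - 1" "n - 1"] by (simp add: numeral_2_eq_2)
  ultimately show ?thesis by (metis mult.assoc mult.left_commute)
qed

lemma card_subsets_containing_one: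
  assumes "finite V" "i \<in> V"
  shows "real (card V) * card {S. S \<subseteq> V \<and> card S = k \<and> i \<in> S} = real k * (card V choose k)"
proof (cases "k = 0")
  case True
  have "S = {}" if "S \<subseteq> V" "card S = 0" for S
    using that assms(1) by (metis card_0_eq finite_subset)
  then have "{S. S \<subseteq> V \<and> card S = k \<and> i \<in> S} = {}" using True by blast
  then have "card {S. S \<subseteq> V \<and> card S = k \<and> i \<in> S} = 0" by (simp only: card.empty)
  with True show ?thesis by simp
next
  case False
  have "{S. S \<subseteq> V \<and> card S = k \<and> i \<in> S} = {S. S \<subseteq> V \<and> card S = k \<and> {i} \<subseteq> S}" by auto
  then have "card {S. S \<subseteq> V \<and> card S = k \<and> i \<in> S} = (card V - 1) choose (k - 1)"
    using False assms card_subsets_containing[of V "{i}" k] by simp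
  moreover have "k * (card V choose k) = card V * ((card V - 1) choose (k - 1))"
    using False by (simp add: times_binomial_minus1_eq)
  ultimately show ?thesis by (metis of_nat_mult)
qed

lemma card_subsets_containing_two:
  assumes "finite V" "i \<in> V" "i' \<in> V" "i \<noteq> i'"
  shows "real (card V) * (real (card V) - 1) * card {S. S \<subseteq> V \<and> card S = k \<and> i \<in> S \<and> i' \<in> S}
           = real k * (real k - 1) * (card V choose k)"
proof (cases "k < 2")
  case True
  have two: "2 \<le> card S" if "S \<subseteq> V" "i \<in> S" "i' \<in> S" for S
  proof -
    have "card {i, i'} \<le> card S"
      using that assms(1) by (intro card_mono) (auto intro: finite_subset)
    with assms(4) show ?thesis by simp
  qed
  have "{S. S \<subseteq> V \<and> card S = k \<and> i \<in> S \<and> i' \<in> S} = {}"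
    using True by (auto dest: two)
  moreover have "real k * (real k - 1) = 0" using True by (cases k) auto
  ultimately show ?thesis by (simp only: card.empty of_nat_0 mult_zero_left mult_zero_right)
next
  case False
  let ?n = "card V"
  have "{S. S \<subseteq> V \<and> card S = k \<and> i \<in> S \<and> i' \<in> S} = {S. S \<subseteq> V \<and> card S = k \<and> {i, i'} \<subseteq> S}"
    by auto
  then have card_eq: "card {S. S \<subseteq> V \<and> card S = k \<and> i \<in> S \<and> i' \<in> S} = (?n - 2) choose (k - 2)"
    using False assms card_subsets_containing[of V "{i, i'}" k] by (simp add: numeral_2_eq_2)
  have binom: "k * (k - 1) * (?n choose k) = ?n * (?n - 1) * ((?n - 2) choose (k - 2))"
    using False by (intro times_binomial_minus2_eq) simp
  have "?n \<ge> 2"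
  proof -
    have "card {i, i'} \<le> ?n" using assms by (intro card_mono) auto
    with assms(4) show ?thesis by simp
  qed
  have "real (k - 1) = real k - 1" "real (?n - 1) = real ?n - 1"
    using False \<open>?n \<ge> 2\<close> by (simp_all add: of_nat_diff)
  then have "real k * (real k - 1) * (?n choose k) = real ?n * (real ?n - 1) * ((?n - 2) choose (k - 2))"
    using binom by (metis of_nat_mult)
  then show ?thesis unfolding card_eq by simp
qed

lemma card_subsets_containing_pair:
  assumes "finite V" "i \<in> V" "i' \<in> V"
  shows "real (card {S. S \<subseteq> V \<and> card S = k \<and> i \<in> S \<and> i' \<in> S})
           = real (card V choose k) * (if i = i' then real k / real (card V)
                                       else real k * (real k - 1) / (real (card V) * (real (card V) - 1)))"
proof (cases "i = i'")
  case True
  have "0 < card V" using assms card_gt_0_iff by blast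
  with True show ?thesis using card_subsets_containing_one[OF assms(1,2), of k]
    by (simp add: eq_divide_eq mult_ac)
next
  case False
  have "card {i, i'} \<le> card V" using assms by (intro card_mono) auto
  with False have "real (card V) * (real (card V) - 1) \<noteq> 0" by simp
  with False show ?thesis using card_subsets_containing_two[OF assms False, of k]
    by (simp add: eq_divide_eq mult_ac)
qed

lemma card_subsets_with_part_sizes:
  assumes fin: "finite U" "finite A" "finite B"
    and disj: "U \<inter> A = {}" "U \<inter> B = {}" "A \<inter> B = {}"
  shows "card {S. U \<subseteq> S \<and> S \<subseteq> U \<union> A \<union> B \<and> card (S \<inter> A) = c1 \<and> card (S \<inter> B) = c2}
           = (card A choose c1) * (card B choose c2)"
proof -
  have parts: "(U \<union> T1 \<union> T2) \<inter> A = T1" "(U \<union> T1 \<union> T2) \<inter> B = T2"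
    if "T1 \<subseteq> A" "T2 \<subseteq> B" for T1 T2
    using that disj by auto
  have "bij_betw (\<lambda>(T1, T2). U \<union> T1 \<union> T2)
          ({T1. T1 \<subseteq> A \<and> card T1 = c1} \<times> {T2. T2 \<subseteq> B \<and> card T2 = c2})
          {S. U \<subseteq> S \<and> S \<subseteq> U \<union> A \<union> B \<and> card (S \<inter> A) = c1 \<and> card (S \<inter> B) = c2}"
  proof (rule bij_betw_byWitness[where f' = "\<lambda>S. (S \<inter> A, S \<inter> B)"])
    show "\<forall>T\<in>{T1. T1 \<subseteq> A \<and> card T1 = c1} \<times> {T2. T2 \<subseteq> B \<and> card T2 = c2}.
                 (\<lambda>S. (S \<inter> A, S \<inter> B)) ((\<lambda>(T1, T2). U \<union> T1 \<union> T2) T) = T"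
      using parts by auto
  qed (use disj parts in auto)
  then show ?thesis
    using fin by (simp add: bij_betw_same_card[symmetric] card_cartesian_product n_subsets)
qed

lemma sum_card_fibres:
  assumes "finite K" "finite A"
  shows "(\<Sum>\<kappa>\<in>K. card {x \<in> A. f x = \<kappa>}) = card {x \<in> A. f x \<in> K}"
proof -
  have "{x \<in> A. f x \<in> K} = (\<Union>\<kappa>\<in>K. {x \<in> A. f x = \<kappa>})" by auto
  moreover have "card (\<Union>\<kappa>\<in>K. {x \<in> A. f x = \<kappa>}) = (\<Sum>\<kappa>\<in>K. card {x \<in> A. f x = \<kappa>})"
    using assms by (intro card_UN_disjoint) auto
  ultimately show ?thesis by simp
qed

lemma sum_card_filter_swap:
  assumes "finite A" "finite B"
  shows "(\<Sum>b\<in>B. card {a \<in> A. P a b}) = (\<Sum>a\<in>A. card {b \<in> B. P a b})"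
proof -
  have "(\<Sum>b\<in>B. card {a \<in> A. P a b}) = (\<Sum>b\<in>B. \<Sum>a\<in>A. of_bool (P a b))"
    using assms(1) by (intro sum.cong refl) (simp add: Int_def)
  also have "\<dots> = (\<Sum>a\<in>A. \<Sum>b\<in>B. of_bool (P a b))" by (rule sum.swap)
  also have "\<dots> = (\<Sum>a\<in>A. card {b \<in> B. P a b})"
    using assms(2) by (intro sum.cong refl) (simp add: Int_def)
  finally show ?thesis .
qed

lemma sum_square_over_subsets_eq:
  fixes s :: "'a \<Rightarrow> real"
  assumes V: "finite V"
  shows "(\<Sum>S\<in>{S. S \<subseteq> V \<and> card S = k}. (\<Sum>i\<in>S. s i)\<^sup>2)
           = (\<Sum>i\<in>V. \<Sum>i'\<in>V. s i * s i' * card {S. S \<subseteq> V \<and> card S = k \<and> i \<in> S \<and> i' \<in> S})"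
proof -
  let ?K = "{S. S \<subseteq> V \<and> card S = k}"
  have square: "(\<Sum>i\<in>S. s i)\<^sup>2 = (\<Sum>i\<in>V. \<Sum>i'\<in>V. if i \<in> S \<and> i' \<in> S then s i * s i' else 0)"
    if "S \<subseteq> V" for S
  proof -
    have "(\<Sum>i\<in>S. s i) = (\<Sum>i\<in>V. if i \<in> S then s i else 0)"
      using that V by (simp add: sum.inter_restrict[symmetric] Int_absorb1)
    then show ?thesis by (simp add: power2_eq_square sum_product) (intro sum.cong refl; simp)
  qed
  have count: "(\<Sum>S\<in>?K. if i \<in> S \<and> i' \<in> S then s i * s i' else 0)
                 = s i * s i' * card {S. S \<subseteq> V \<and> card S = k \<and> i \<in> S \<and> i' \<in> S}" for i i'
  proof -
    have "{S \<in> ?K. i \<in> S \<and> i' \<in> S} = {S. S \<subseteq> V \<and> card S = k \<and> i \<in> S \<and> i' \<in> S}" by auto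
    then show ?thesis using V by (simp add: sum.inter_filter[symmetric])
  qed
  have "(\<Sum>S\<in>?K. (\<Sum>i\<in>S. s i)\<^sup>2)
          = (\<Sum>S\<in>?K. \<Sum>i\<in>V. \<Sum>i'\<in>V. if i \<in> S \<and> i' \<in> S then s i * s i' else 0)"
    by (intro sum.cong refl square) blast
  also have "\<dots> = (\<Sum>i\<in>V. \<Sum>i'\<in>V. \<Sum>S\<in>?K. if i \<in> S \<and> i' \<in> S then s i * s i' else 0)"
    by (subst sum.swap) (intro sum.cong refl sum.swap)
  finally show ?thesis by (simp only: count)
qed

lemma falling_ratio_le_square_ratio:
  assumes "k \<le> n"
  shows "real k * (real k - 1) / (real n * (real n - 1)) \<le> (real k / real n)\<^sup>2"
proof (cases "n \<le> 1")
  case False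
  then have n: "0 < real n" "0 < real n - 1" by auto
  have "real k * real n * (real k * real n - real n) \<le> real k * real n * (real k * real n - real k)"
    using assms by (intro mult_left_mono) auto
  then show ?thesis using n by (simp add: field_simps power2_eq_square)
next
  case True
  then have zero: "real n * (real n - 1) = 0" by (cases n) auto
  show ?thesis by (simp only: zero div_by_0 zero_le_power2)
qed

lemma sum_square_over_subsets_le:
  fixes s :: "'a \<Rightarrow> real"
  assumes V: "finite V"
  shows "(\<Sum>S\<in>{S. S \<subseteq> V \<and> card S = k}. (\<Sum>i\<in>S. s i)\<^sup>2)
           \<le> real (card V choose k) * (real k / card V * (\<Sum>i\<in>V. (s i)\<^sup>2)
                                      + (real k / card V)\<^sup>2 * (\<Sum>i\<in>V. s i)\<^sup>2)"
proof (cases "k \<le> card V \<and> V \<noteq> {}")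
  case True
  let ?n = "real (card V)" and ?C = "real (card V choose k)"
  define x1 where "x1 = ?C * (real k / ?n)"
  define x2 where "x2 = ?C * (real k * (real k - 1) / (?n * (?n - 1)))"
  have n_pos: "0 < ?n" using V True by (simp add: card_gt_0_iff)
  have count: "real (card {S. S \<subseteq> V \<and> card S = k \<and> i \<in> S \<and> i' \<in> S}) = (if i = i' then x1 else x2)"
    if "i \<in> V" "i' \<in> V" for i i'
    using card_subsets_containing_pair[OF V that, of k] by (simp add: x1_def x2_def)
  have "0 \<le> x2" unfolding x2_def using n_pos by (cases k; cases "card V") auto
  have "x2 \<le> ?C * (real k / ?n)\<^sup>2"
    unfolding x2_def using True falling_ratio_le_square_ratio by (intro mult_left_mono) auto
  have "(\<Sum>S\<in>{S. S \<subseteq> V \<and> card S = k}. (\<Sum>i\<in>S. s i)\<^sup>2)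
          = (\<Sum>i\<in>V. \<Sum>i'\<in>V. s i * s i' * (if i = i' then x1 else x2))"
    unfolding sum_square_over_subsets_eq[OF V] by (intro sum.cong refl) (simp add: count)
  also have "\<dots> = (\<Sum>i\<in>V. \<Sum>i'\<in>V. x2 * (s i * s i') + (if i = i' then (x1 - x2) * (s i)\<^sup>2 else 0))"
    by (intro sum.cong refl) (auto simp: power2_eq_square algebra_simps)
  also have "\<dots> = (\<Sum>i\<in>V. \<Sum>i'\<in>V. x2 * (s i * s i')) + (\<Sum>i\<in>V. (x1 - x2) * (s i)\<^sup>2)"
    using V by (simp add: sum.distrib)
  also have "\<dots> = x2 * (\<Sum>i\<in>V. s i)\<^sup>2 + (x1 - x2) * (\<Sum>i\<in>V. (s i)\<^sup>2)"
    unfolding power2_eq_square sum_product by (simp add: sum_distrib_left)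
  also have "\<dots> \<le> ?C * (real k / ?n)\<^sup>2 * (\<Sum>i\<in>V. s i)\<^sup>2 + x1 * (\<Sum>i\<in>V. (s i)\<^sup>2)"
    using \<open>0 \<le> x2\<close> \<open>x2 \<le> ?C * (real k / ?n)\<^sup>2\<close> sum_nonneg[of V "\<lambda>i. (s i)\<^sup>2"]
    by (smt (verit) mult_right_mono zero_le_power2)
  finally show ?thesis unfolding x1_def by (simp add: algebra_simps)
next
  case False
  show ?thesis
  proof (cases "k \<le> card V")
    case True
    with False V have "V = {}" "k = 0" by auto
    then show ?thesis by simp
  next
    case False
    then have "{S. S \<subseteq> V \<and> card S = k} = {}" using V card_mono by fastforce
    then show ?thesis using False by (simp only: sum.empty) (simp add: binomial_eq_0)
  qed
qed

lemma card_abs_gt_mult_square_le: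
  fixes f :: "'a \<Rightarrow> real"
  assumes "finite X" "0 \<le> t"
  shows "real (card {x \<in> X. t < \<bar>f x\<bar>}) * t\<^sup>2 \<le> (\<Sum>x\<in>X. (f x)\<^sup>2)"
proof -
  have "real (card {x \<in> X. t < \<bar>f x\<bar>}) * t\<^sup>2 = (\<Sum>x \<in> {x \<in> X. t < \<bar>f x\<bar>}. t\<^sup>2)" by simp
  also have "\<dots> \<le> (\<Sum>x \<in> {x \<in> X. t < \<bar>f x\<bar>}. (f x)\<^sup>2)"
    using assms(2) by (intro sum_mono) (simp add: abs_le_square_iff[symmetric])
  also have "\<dots> \<le> (\<Sum>x\<in>X. (f x)\<^sup>2)" using assms(1) by (intro sum_mono2) auto
  finally show ?thesis .
qed

section \<open>Ratios of binomial coefficients\<close>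

lemma choose_Suc_mult_eq:
  "real (n choose Suc m) * real (Suc m) = real (n choose m) * (real n - real m)"
proof (cases "m \<le> n")
  case True
  have "Suc m * (n choose Suc m) = (n - m) * (n choose m)"
    by (simp only: binomial_absorption binomial_absorb_comp)
  then show ?thesis using True by (metis mult.commute of_nat_diff of_nat_mult)
qed (simp add: binomial_eq_0)

lemma choose_mult_choose_shift_ge:
  fixes a b c c' :: nat and q :: real
  assumes "c \<le> c'" "c' \<le> a" "0 \<le> q"
    and factor: "\<And>x. x < c' \<Longrightarrow> q * (real a - real x) \<le> real b - real x"
  shows "q ^ (c' - c) * (real (a choose c') * real (b choose c)) \<le> real (b choose c') * real (a choose c)"
  using assms(1,2)
proof (induction c' rule: dec_induct)
  case (step m)
  then have m: "m < c'" and a_m: "real m \<le> real a" using assms by auto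
  have "q ^ (Suc m - c) * (real (a choose Suc m) * real (b choose c)) * real (Suc m)
        = q * (real a - real m) * (q ^ (m - c) * (real (a choose m) * real (b choose c)))"
  proof -
    have "Suc m - c = Suc (m - c)" using \<open>c \<le> m\<close> by simp
    then have "q ^ (Suc m - c) * (real (a choose Suc m) * real (b choose c)) * real (Suc m)
        = q * q ^ (m - c) * real (b choose c) * (real (a choose Suc m) * real (Suc m))"
      by (simp only: power_Suc mult_ac)
    also have "\<dots> = q * q ^ (m - c) * real (b choose c) * (real (a choose m) * (real a - real m))"
      unfolding choose_Suc_mult_eq ..
    finally show ?thesis by (simp only: mult_ac)
  qed
  also have "\<dots> \<le> (real b - real m) * (real (b choose m) * real (a choose c))"
  proof (rule mult_mono[OF factor[OF m] step.IH])
    show "0 \<le> real b - real m"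
      using factor[OF m] a_m assms(3) by (smt (verit) mult_nonneg_nonneg)
  qed (use assms(2,3) m in auto)
  also have "\<dots> = real (a choose c) * (real (b choose Suc m) * real (Suc m))"
    unfolding choose_Suc_mult_eq by (simp only: mult_ac)
  finally show ?case by (simp add: mult_ac del: of_nat_Suc)
qed simp

lemma swapped_size_factor_le:
  fixes r w x :: nat
  assumes "3 \<le> w" "x \<le> r"
  shows "(1 - 3 / real w) * (real (r * (w + 1)) - real x) \<le> real (r * (w - 1)) - real x"
proof -
  have "(real w - 3) * (real (r * (w + 1)) - real x)
          = real w * (real (r * (w - 1)) - real x) + (3 * real x - 3 * real r - real r * real w)"
    using assms(1) by (simp add: of_nat_diff algebra_simps)
  moreover have "real x \<le> real r" "0 \<le> real r * real w" using assms(2) by simp_all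
  ultimately have "(real w - 3) * (real (r * (w + 1)) - real x) \<le> real w * (real (r * (w - 1)) - real x)"
    by linarith
  moreover have "(1 - 3 / real w) * (real (r * (w + 1)) - real x) = (real w - 3) * (real (r * (w + 1)) - real x) / real w"
    using assms(1) by (simp add: field_simps)
  ultimately show ?thesis using assms(1) by (simp add: divide_le_eq mult.commute)
qed

lemma three_quarters_le_power:
  assumes "12 * m \<le> w"
  shows "3/4 \<le> (1 - 3 / real w) ^ m"
proof (cases "m = 0")
  case False
  then have w: "12 \<le> real w" using assms by simp
  then have "- 1 \<le> - 3 / real w" by simp
  from Bernoulli_inequality[OF this, of m] have "1 + real m * (- 3 / real w) \<le> (1 - 3 / real w) ^ m"
    by simp
  moreover have "- 1/4 \<le> real m * (- 3 / real w)" using assms w by (simp add: field_simps)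
  ultimately show ?thesis by linarith
qed simp

lemma choose_swap_ratio_ge_ordered:
  fixes a b r w c1 c2 :: nat
  assumes ab: "{a, b} = {r * (w - 1), r * (w + 1)}" and w: "2 \<le> w"
    and c: "c2 \<le> c1" "c1 \<le> r" and close: "12 * (real c1 - real c2) \<le> real w"
  shows "3/4 * (real (a choose c1) * real (b choose c2)) \<le> real (b choose c1) * real (a choose c2)"
proof (cases "c1 = c2")
  case False
  have m: "12 * (c1 - c2) \<le> w" using c close by (simp add: of_nat_diff flip: of_nat_le_iff)
  with False c have w12: "12 \<le> w" by linarith
  \<comment> \<open>The sizes \<open>r(w - 1)\<close> and \<open>r(w + 1)\<close> have ratio about \<open>1 - 2/w\<close>; the slack down to
    \<open>1 - 3/w\<close> absorbs the shift by the at most \<open>r\<close> points already chosen.\<close>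
  define q :: real where "q = 1 - 3 / real w"
  have r_le: "r \<le> a" "r \<le> b" using ab w by (auto simp: doubleton_eq_iff)
  have "q ^ (c1 - c2) * (real (a choose c1) * real (b choose c2)) \<le> real (b choose c1) * real (a choose c2)"
  proof (rule choose_mult_choose_shift_ge)
    show "q * (real a - real x) \<le> real b - real x" if "x < c1" for x
    proof (cases "a \<le> b")
      case True
      have "q * (real a - real x) \<le> 1 * (real a - real x)"
        using that c r_le w12 by (intro mult_right_mono) (auto simp: q_def)
      then show ?thesis using True by simp
    next
      case False
      moreover have "r * (w - 1) \<le> r * (w + 1)" by (intro mult_left_mono) auto
      ultimately have "a = r * (w + 1)" "b = r * (w - 1)" using ab by (auto simp: doubleton_eq_iff)
      with swapped_size_factor_le[of w x r] that c w12 show ?thesis by (simp add: q_def)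
    qed
  qed (use c r_le w12 in \<open>auto simp: q_def\<close>)
  moreover have "3/4 \<le> q ^ (c1 - c2)" unfolding q_def using m by (rule three_quarters_le_power)
  ultimately show ?thesis by (smt (verit) mult_right_mono zero_le_mult_iff of_nat_0_le_iff)
qed (simp add: mult_ac)

lemma choose_swap_ratio_ge:
  fixes a b r w c1 c2 :: nat
  assumes ab: "{a, b} = {r * (w - 1), r * (w + 1)}" and w: "2 \<le> w"
    and c: "c1 \<le> r" "c2 \<le> r" and close: "12 * \<bar>real c1 - real c2\<bar> \<le> real w"
  shows "3/4 * (real (a choose c1) * real (b choose c2)) \<le> real (b choose c1) * real (a choose c2)"
proof (cases "c2 \<le> c1")
  case True
  then show ?thesis using choose_swap_ratio_ge_ordered[OF ab w True c(1)] close by simp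
next
  case False
  have "{b, a} = {r * (w - 1), r * (w + 1)}" using ab by (simp add: insert_commute)
  from choose_swap_ratio_ge_ordered[OF this w _ c(2)] False close show ?thesis
    by (simp add: mult_ac)
qed

section \<open>Blocks and features\<close>

definition flip_sign :: "nat \<Rightarrow> (nat \<Rightarrow> int) \<Rightarrow> nat \<Rightarrow> int" where
  "flip_sign j z = z(j := - z j)"

definition block_end :: "(nat \<Rightarrow> int) \<Rightarrow> nat \<Rightarrow> nat \<Rightarrow> nat \<Rightarrow> nat" where
  "block_end z w r l = (\<Sum>m=1..l. block_size z w r m)"

lemma signvecs_cases: "z \<in> signvecs h \<Longrightarrow> j \<in> {1..h} \<Longrightarrow> z j = -1 \<or> z j = 1"
  by (auto simp: signvecs_def PiE_def Pi_def)

lemma flip_sign_in_signvecs: "z \<in> signvecs h \<Longrightarrow> j \<in> {1..h} \<Longrightarrow> flip_sign j z \<in> signvecs h"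
  by (auto simp: signvecs_def flip_sign_def PiE_def Pi_def extensional_def)

lemma flip_sign_flip_sign [simp]: "flip_sign j (flip_sign j z) = z"
  by (simp add: flip_sign_def)

lemma bij_betw_flip_sign: "j \<in> {1..h} \<Longrightarrow> bij_betw (flip_sign j) (signvecs h) (signvecs h)"
  by (rule bij_betw_byWitness[where f' = "flip_sign j"]) (auto intro: flip_sign_in_signvecs)

lemma sum_abs_diff_signvecs:
  assumes "u \<in> signvecs h" "v \<in> signvecs h"
  shows "(\<Sum>j=1..h. \<bar>real_of_int (u j - v j)\<bar>) = 2 * real (card {j \<in> {1..h}. u j \<noteq> v j})"
proof -
  have "(\<Sum>j=1..h. \<bar>real_of_int (u j - v j)\<bar>) = (\<Sum>j=1..h. if u j \<noteq> v j then 2 else 0)"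
    using signvecs_cases[OF assms(1)] signvecs_cases[OF assms(2)]
    by (intro sum.cong refl) fastforce
  also have "\<dots> = 2 * real (card {j \<in> {1..h}. u j \<noteq> v j})"
    by (simp add: sum.If_cases Int_def)
  finally show ?thesis .
qed

lemma int_block_size_odd:
  assumes "1 \<le> m" "\<bar>z m\<bar> \<le> 1" "1 \<le> w"
  shows "int (block_size z w r (2 * m - 1)) = int r * (int w - z m)"
proof -
  have "odd (2 * m - 1)" "(2 * m - 1 + 1) div 2 = m" using assms(1) by auto
  then show ?thesis using assms(2,3) by (simp add: block_size_def)
qed

lemma int_block_size_even:
  assumes "\<bar>z m\<bar> \<le> 1" "1 \<le> w"
  shows "int (block_size z w r (2 * m)) = int r * (int w + z m)"
  using assms by (simp add: block_size_def)

lemma block_size_pair_sum: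
  assumes "1 \<le> m" "\<bar>z m\<bar> \<le> 1" "1 \<le> w"
  shows "block_size z w r (2 * m - 1) + block_size z w r (2 * m) = 2 * r * w"
proof -
  have "int (block_size z w r (2 * m - 1) + block_size z w r (2 * m)) = int (2 * r * w)"
    using int_block_size_odd[of m z w r] int_block_size_even[of z m w r] assms
    by (simp add: algebra_simps)
  then show ?thesis by (simp only: of_nat_eq_iff)
qed

lemma block_size_flip_sign:
  assumes "1 \<le> j"
  shows "block_size (flip_sign j z) w r m = block_size z w r (transpose (2 * j - 1) (2 * j) m)"
proof -
  consider "m = 2 * j - 1" | "m = 2 * j" | "m \<noteq> 2 * j - 1" "m \<noteq> 2 * j" by blast
  then show ?thesis
  proof cases
    case 1
    then have "odd m" "(m + 1) div 2 = j" using assms by auto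
    then show ?thesis using 1 assms by (simp add: block_size_def flip_sign_def)
  next
    case 2
    then have "odd (2 * j - 1)" "(2 * j - 1 + 1) div 2 = j" using assms by auto
    then show ?thesis using 2 assms by (simp add: block_size_def flip_sign_def)
  next
    case 3
    then have "m div 2 \<noteq> j" if "even m" using that by auto
    moreover have "(m + 1) div 2 \<noteq> j" if "odd m" using that 3 by auto
    ultimately show ?thesis using 3 by (simp add: block_size_def flip_sign_def)
  qed
qed

lemma block_end_Suc: "block_end z w r (Suc l) = block_end z w r l + block_size z w r (Suc l)"
  by (simp add: block_end_def)

lemma block_end_mono: "l \<le> l' \<Longrightarrow> block_end z w r l \<le> block_end z w r l'"
  unfolding block_end_def by (intro sum_mono2) auto

lemma block_end_flip_sign:
  assumes "1 \<le> j" "l \<noteq> 2 * j - 1"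
  shows "block_end (flip_sign j z) w r l = block_end z w r l"
proof -
  have "bij_betw (transpose (2 * j - 1) (2 * j)) {1..l} {1..l}"
    using assms by (intro bij_betw_transpose_iff) auto
  then show ?thesis
    unfolding block_end_def block_size_flip_sign[OF assms(1)] by (rule sum.reindex_bij_betw)
qed

lemma block_end_even:
  assumes "z \<in> signvecs h" "m \<le> h" "1 \<le> w"
  shows "block_end z w r (2 * m) = 2 * r * w * m"
  using assms(2)
proof (induction m)
  case (Suc m)
  have "\<bar>z (Suc m)\<bar> \<le> 1" using signvecs_cases[OF assms(1)] Suc.prems by fastforce
  then have "block_size z w r (2 * Suc m - 1) + block_size z w r (2 * Suc m) = 2 * r * w"
    using assms(3) by (intro block_size_pair_sum) auto
  moreover have "2 * Suc m = Suc (Suc (2 * m))" by simp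
  ultimately show ?case using Suc by (simp add: block_end_Suc)
qed (simp add: block_end_def)

lemma feature_eq_Least: "feature z h w r i = (LEAST l. i \<le> block_end z w r l)"
  by (simp add: feature_def block_end_def)

lemma feature_le: "i \<le> block_end z w r l \<Longrightarrow> feature z h w r i \<le> l"
  unfolding feature_eq_Least by (rule Least_le)

lemma le_block_end_feature: "i \<le> block_end z w r l \<Longrightarrow> i \<le> block_end z w r (feature z h w r i)"
  unfolding feature_eq_Least by (rule LeastI)

lemma feature_eqI:
  assumes "block_end z w r (l - 1) < i" "i \<le> block_end z w r l"
  shows "feature z h w r i = l"
proof (rule antisym)
  show "feature z h w r i \<le> l" using assms(2) by (rule feature_le)
  show "l \<le> feature z h w r i"
  proof (rule ccontr)
    assume "\<not> l \<le> feature z h w r i"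
    then have "block_end z w r (feature z h w r i) \<le> block_end z w r (l - 1)"
      by (intro block_end_mono) simp
    with assms le_block_end_feature[OF assms(2), where h = h] show False by simp
  qed
qed

lemma feature_pos: "1 \<le> i \<Longrightarrow> i \<le> block_end z w r l \<Longrightarrow> 1 \<le> feature z h w r i"
  using le_block_end_feature[of i z w r l h] by (cases "feature z h w r i") (auto simp: block_end_def)

lemma feature_mono:
  "i \<le> i' \<Longrightarrow> i' \<le> block_end z w r l \<Longrightarrow> feature z h w r i \<le> feature z h w r i'"
  using le_block_end_feature[of i' z w r l h] by (intro feature_le) simp

lemma feature_flip_sign:
  assumes "1 \<le> j" "i \<le> block_end z w r (2 * j - 2) \<or> block_end z w r (2 * j) < i"
  shows "feature (flip_sign j z) h w r i = feature z h w r i"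
proof -
  have "i \<le> block_end (flip_sign j z) w r l \<longleftrightarrow> i \<le> block_end z w r l" for l
  proof (cases "l = 2 * j - 1")
    case True
    have mono: "block_end y w r (2 * j - 2) \<le> block_end y w r l" "block_end y w r l \<le> block_end y w r (2 * j)"
      for y using True by (auto intro: block_end_mono)
    note mono[of z] mono[of "flip_sign j z"]
    moreover have "block_end (flip_sign j z) w r (2 * j - 2) = block_end z w r (2 * j - 2)"
      "block_end (flip_sign j z) w r (2 * j) = block_end z w r (2 * j)"
      using assms(1) by (auto intro: block_end_flip_sign)
    ultimately show ?thesis using assms(2) by auto
  qed (use assms(1) block_end_flip_sign in auto)
  then show ?thesis by (simp add: feature_eq_Least)
qed

lemma sorted_mset_eq_imp_eq:
  "sorted xs \<Longrightarrow> sorted ys \<Longrightarrow> mset xs = mset ys \<Longrightarrow> xs = ys"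
  by (metis properties_for_sort sorted_sort_id)

lemma mset_feature_panel:
  "finite S \<Longrightarrow> mset (feature_panel z h w r S) = image_mset (feature z h w r) (mset_set S)"
  by (simp add: feature_panel_def flip: sorted_list_of_mset_set)

locale camouflage =
  fixes h w r :: nat
  assumes w_ge_2: "2 \<le> w" and r_pos: "1 \<le> r"
begin

definition "n = 2 * h * w * r"

definition "samples k = {S. S \<subseteq> {1..n} \<and> card S = k}"

definition "errors g k z j = {S \<in> samples k. g (feature_panel z h w r S) j \<noteq> z j}"

lemma finite_samples [simp]: "finite (samples k)"
  unfolding samples_def by (rule finite_subset[of _ "Pow {1..n}"]) auto

lemma card_samples: "card (samples k) = n choose k"
  unfolding samples_def using n_subsets[of "{1..n}" k] by simp

lemma card_samples_filter_split:
  "real (card {S \<in> samples k. P S}) + real (card {S \<in> samples k. \<not> P S}) = real (n choose k)"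
proof -
  have "card {S \<in> samples k. P S} + card {S \<in> samples k. \<not> P S} = card (samples k)"
    by (subst card_Un_disjoint[symmetric]) (auto intro: arg_cong[where f = card])
  then show ?thesis by (simp add: card_samples flip: of_nat_add)
qed

lemma block_end_total: "z \<in> signvecs h \<Longrightarrow> block_end z w r (2 * h) = n"
  using block_end_even[of z h h w r] w_ge_2 by (simp add: n_def mult_ac)

lemma feature_range: "z \<in> signvecs h \<Longrightarrow> i \<in> {1..n} \<Longrightarrow> feature z h w r i \<in> {1..2 * h}"
  using feature_le[of i z w r "2 * h" h] feature_pos[of i z w r "2 * h" h] block_end_total by auto

lemma sorted_feature_panel:
  assumes "z \<in> signvecs h" "S \<subseteq> {1..n}"
  shows "sorted (feature_panel z h w r S)"
proof -
  have "finite S" using assms(2) finite_subset by blast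
  have mono: "feature z h w r i \<le> feature z h w r i'" if "i' \<in> S" "i \<le> i'" for i i'
  proof -
    have "i' \<le> n" using that(1) assms(2) by auto
    then show ?thesis
      using feature_mono[of i i' z w r "2 * h" h] that(2) block_end_total[OF assms(1)] by simp
  qed
  have "sorted_wrt (\<le>) (sorted_list_of_set S)" by simp
  then have "sorted_wrt (\<lambda>i i'. feature z h w r i \<le> feature z h w r i') (sorted_list_of_set S)"
    by (rule sorted_wrt_mono_rel[rotated]) (use \<open>finite S\<close> mono in auto)
  then show ?thesis by (simp add: feature_panel_def sorted_map)
qed

end

section \<open>Two populations differing in one sign\<close>

locale flip_pair = camouflage +
  fixes z :: "nat \<Rightarrow> int" and j :: nat
  assumes z_sign: "z \<in> signvecs h" and j_range: "j \<in> {1..h}"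
begin

abbreviation "z' \<equiv> flip_sign j z"

definition "offset = block_end z w r (2 * j - 2)"

definition "pair_block = {offset + 1 .. offset + 2 * r * w}"

definition "odd_block y = {offset + 1 .. offset + block_size y w r (2 * j - 1)}"

definition "key y S = (S - pair_block, card (S \<inter> odd_block y), card (S \<inter> (pair_block - odd_block y)))"

lemma j_pos: "1 \<le> j"
  using j_range by simp

lemma pair_signvecs: "y \<in> {z, z'} \<Longrightarrow> y \<in> signvecs h"
  using z_sign j_range flip_sign_in_signvecs by auto

lemma abs_pair_sign: "y \<in> {z, z'} \<Longrightarrow> \<bar>y j\<bar> \<le> 1"
  using signvecs_cases[OF pair_signvecs j_range] by fastforce

lemma block_sizes_sum:
  "y \<in> {z, z'} \<Longrightarrow> block_size y w r (2 * j - 1) + block_size y w r (2 * j) = 2 * r * w"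
  using block_size_pair_sum[of j y w r] j_pos abs_pair_sign[of y] w_ge_2 by simp

lemma block_size_flip_pair:
  "block_size z' w r (2 * j - 1) = block_size z w r (2 * j)"
  "block_size z' w r (2 * j) = block_size z w r (2 * j - 1)"
  using j_pos by (simp_all add: block_size_flip_sign)

lemma block_sizes_pair:
  "{block_size z w r (2 * j - 1), block_size z w r (2 * j)} = {r * (w - 1), r * (w + 1)}"
proof -
  have odd: "int (block_size z w r (2 * j - 1)) = int r * (int w - z j)"
    and even: "int (block_size z w r (2 * j)) = int r * (int w + z j)"
    using int_block_size_odd[OF j_pos] int_block_size_even abs_pair_sign w_ge_2 by auto
  have lo: "int (r * (w - 1)) = int r * (int w - 1)" and hi: "int (r * (w + 1)) = int r * (int w + 1)"
    using w_ge_2 by (simp_all add: of_nat_diff algebra_simps)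
  consider "z j = 1" | "z j = -1" using signvecs_cases[OF z_sign j_range] by blast
  then show ?thesis
  proof cases
    case 1
    then have "int (block_size z w r (2 * j - 1)) = int (r * (w - 1))"
      "int (block_size z w r (2 * j)) = int (r * (w + 1))"
      unfolding lo hi using odd even by simp_all
    then show ?thesis by (simp only: of_nat_eq_iff)
  next
    case 2
    then have "int (block_size z w r (2 * j - 1)) = int (r * (w + 1))"
      "int (block_size z w r (2 * j)) = int (r * (w - 1))"
      unfolding lo hi using odd even by simp_all
    then show ?thesis by (simp only: of_nat_eq_iff insert_commute)
  qed
qed

lemma block_end_before_pair: "y \<in> {z, z'} \<Longrightarrow> block_end y w r (2 * j - 2) = offset"
  using block_end_flip_sign[OF j_pos, of "2 * j - 2" z w r] j_pos unfolding offset_def by auto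

lemma block_end_odd: "y \<in> {z, z'} \<Longrightarrow> block_end y w r (2 * j - 1) = offset + block_size y w r (2 * j - 1)"
proof -
  have "2 * j - 1 = Suc (2 * j - 2)" using j_pos by simp
  then show "y \<in> {z, z'} \<Longrightarrow> ?thesis" using block_end_before_pair by (simp add: block_end_Suc)
qed

lemma block_end_pair: "y \<in> {z, z'} \<Longrightarrow> block_end y w r (2 * j) = offset + 2 * r * w"
proof -
  assume y: "y \<in> {z, z'}"
  have "2 * j = Suc (2 * j - 1)" using j_pos by simp
  then have "block_end y w r (2 * j) = block_end y w r (2 * j - 1) + block_size y w r (2 * j)"
    by (metis block_end_Suc)
  then show ?thesis using block_end_odd[OF y] block_sizes_sum[OF y] by simp
qed

lemma odd_block_subset: "y \<in> {z, z'} \<Longrightarrow> odd_block y \<subseteq> pair_block"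
  using block_sizes_sum unfolding odd_block_def pair_block_def by fastforce

lemma pair_block_subset: "pair_block \<subseteq> {1..n}"
proof -
  have "block_end z w r (2 * j) \<le> block_end z w r (2 * h)"
    using j_range by (intro block_end_mono) simp
  then show ?thesis
    using block_end_pair[of z] block_end_total[OF z_sign] unfolding pair_block_def by auto
qed

lemma card_odd_block: "card (odd_block y) = block_size y w r (2 * j - 1)"
  by (simp add: odd_block_def)

lemma card_even_block: "y \<in> {z, z'} \<Longrightarrow> card (pair_block - odd_block y) = block_size y w r (2 * j)"
proof -
  assume y: "y \<in> {z, z'}"
  have "card (pair_block - odd_block y) = card pair_block - card (odd_block y)"
    using odd_block_subset[OF y] by (intro card_Diff_subset) (auto simp: odd_block_def)
  then show ?thesis using block_sizes_sum[OF y] by (simp add: card_odd_block pair_block_def)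
qed

lemma feature_odd_block:
  assumes "y \<in> {z, z'}" "i \<in> odd_block y"
  shows "feature y h w r i = 2 * j - 1"
proof (rule feature_eqI)
  have "2 * j - 1 - 1 = 2 * j - 2" by simp
  then show "block_end y w r (2 * j - 1 - 1) < i"
    using assms by (simp add: block_end_before_pair odd_block_def)
  show "i \<le> block_end y w r (2 * j - 1)"
    using assms unfolding block_end_odd[OF assms(1)] by (simp add: odd_block_def)
qed

lemma feature_even_block:
  assumes "y \<in> {z, z'}" "i \<in> pair_block - odd_block y"
  shows "feature y h w r i = 2 * j"
proof (rule feature_eqI)
  show "block_end y w r (2 * j - 1) < i" "i \<le> block_end y w r (2 * j)"
    using assms unfolding block_end_odd[OF assms(1)] block_end_pair[OF assms(1)]
    by (auto simp: odd_block_def pair_block_def)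
qed

lemma feature_outside_pair: "y \<in> {z, z'} \<Longrightarrow> i \<notin> pair_block \<Longrightarrow> feature y h w r i = feature z h w r i"
  using feature_flip_sign[OF j_pos, of i z w r h] block_end_pair[of z]
  unfolding pair_block_def offset_def by auto

lemma split_pair_block:
  assumes "y \<in> {z, z'}"
  shows "S = (S - pair_block) \<union> ((S \<inter> odd_block y) \<union> (S \<inter> (pair_block - odd_block y)))"
    and "(S - pair_block) \<inter> ((S \<inter> odd_block y) \<union> (S \<inter> (pair_block - odd_block y))) = {}"
    and "(S \<inter> odd_block y) \<inter> (S \<inter> (pair_block - odd_block y)) = {}"
  using odd_block_subset[OF assms] by blast+

lemma card_split_pair_block:
  assumes "finite S" "y \<in> {z, z'}"
  shows "card S = card (S - pair_block) + card (S \<inter> odd_block y) + card (S \<inter> (pair_block - odd_block y))"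
  using assms(1) card_Un_disjoint split_pair_block[OF assms(2), of S]
  by (metis (no_types, lifting) add.assoc finite_Diff finite_Int finite_Un)

lemma mset_feature_panel_pair:
  assumes "y \<in> {z, z'}" "S \<subseteq> {1..n}"
  shows "mset (feature_panel y h w r S) =
           image_mset (feature z h w r) (mset_set (S - pair_block))
           + replicate_mset (card (S \<inter> odd_block y)) (2 * j - 1)
           + replicate_mset (card (S \<inter> (pair_block - odd_block y))) (2 * j)"
proof -
  let ?O = "S \<inter> odd_block y" and ?E = "S \<inter> (pair_block - odd_block y)"
  have fin: "finite S" using assms(2) finite_subset by blast
  have "mset_set S = mset_set (S - pair_block) + (mset_set ?O + mset_set ?E)"
    using fin split_pair_block[OF assms(1), of S] mset_set_Union
    by (metis (no_types, lifting) finite_Diff finite_Int finite_Un)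
  moreover have "image_mset (feature y h w r) (mset_set (S - pair_block))
                   = image_mset (feature z h w r) (mset_set (S - pair_block))"
    using feature_outside_pair[OF assms(1)] fin by (intro image_mset_cong) simp
  moreover have "image_mset (feature y h w r) (mset_set ?O) = replicate_mset (card ?O) (2 * j - 1)"
    using feature_odd_block[OF assms(1)] fin
    by (subst image_mset_cong[where g = "\<lambda>_. 2 * j - 1"]) (auto simp: image_mset_const_eq)
  moreover have "image_mset (feature y h w r) (mset_set ?E) = replicate_mset (card ?E) (2 * j)"
    using feature_even_block[OF assms(1)] fin
    by (subst image_mset_cong[where g = "\<lambda>_. 2 * j"]) (auto simp: image_mset_const_eq)
  ultimately show ?thesis using fin by (simp add: mset_feature_panel add.assoc)
qed

lemma feature_panel_eq_if_key_eq:
  assumes "y1 \<in> {z, z'}" "y2 \<in> {z, z'}" "S1 \<subseteq> {1..n}" "S2 \<subseteq> {1..n}"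
    and "key y1 S1 = key y2 S2"
  shows "feature_panel y1 h w r S1 = feature_panel y2 h w r S2"
proof (rule sorted_mset_eq_imp_eq)
  show "sorted (feature_panel y1 h w r S1)" "sorted (feature_panel y2 h w r S2)"
    using sorted_feature_panel pair_signvecs assms(1-4) by blast+
  show "mset (feature_panel y1 h w r S1) = mset (feature_panel y2 h w r S2)"
    using assms by (simp add: mset_feature_panel_pair key_def)
qed

lemma card_key_class:
  assumes y: "y \<in> {z, z'}" and U: "U \<subseteq> {1..n} - pair_block" and k: "card U + c1 + c2 = k"
  shows "card {S \<in> samples k. key y S = (U, c1, c2)}
           = (block_size y w r (2 * j - 1) choose c1) * (block_size y w r (2 * j) choose c2)"
proof -
  let ?O = "odd_block y" and ?E = "pair_block - odd_block y"
  have "{S \<in> samples k. key y S = (U, c1, c2)}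
          = {S. U \<subseteq> S \<and> S \<subseteq> U \<union> ?O \<union> ?E \<and> card (S \<inter> ?O) = c1 \<and> card (S \<inter> ?E) = c2}"
  proof (intro equalityI subsetI)
    fix S assume "S \<in> {S \<in> samples k. key y S = (U, c1, c2)}"
    then show "S \<in> {S. U \<subseteq> S \<and> S \<subseteq> U \<union> ?O \<union> ?E \<and> card (S \<inter> ?O) = c1 \<and> card (S \<inter> ?E) = c2}"
      using odd_block_subset[OF y] by (auto simp: key_def)
  next
    fix S assume S: "S \<in> {S. U \<subseteq> S \<and> S \<subseteq> U \<union> ?O \<union> ?E \<and> card (S \<inter> ?O) = c1 \<and> card (S \<inter> ?E) = c2}"
    then have "S \<subseteq> {1..n}" "S - pair_block = U"
      using U pair_block_subset odd_block_subset[OF y] by blast+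
    moreover from this have "card S = k"
      using S k card_split_pair_block[OF _ y, of S] finite_subset by fastforce
    ultimately show "S \<in> {S \<in> samples k. key y S = (U, c1, c2)}"
      using S by (simp add: samples_def key_def)
  qed
  also have "card \<dots> = (card ?O choose c1) * (card ?E choose c2)"
  proof (rule card_subsets_with_part_sizes)
    show "finite U" "finite ?O" "finite ?E"
      using finite_subset[OF U] by (simp_all add: odd_block_def pair_block_def)
  qed (use U odd_block_subset[OF y] in auto)
  finally show ?thesis using y by (simp add: card_odd_block card_even_block)
qed

definition "imbalance S = real (card (S \<inter> odd_block z)) - real (card (S \<inter> (pair_block - odd_block z)))"

definition "balanced S \<longleftrightarrow> 12 * \<bar>imbalance S\<bar> \<le> real w"

lemma imbalance_eq_if_key: "key z S = (U, c1, c2) \<Longrightarrow> imbalance S = real c1 - real c2"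
  by (simp add: key_def imbalance_def)

lemma key_sampleD:
  assumes "y \<in> {z, z'}" "S \<in> samples k" "key y S = (U, c1, c2)"
  shows "U \<subseteq> {1..n} - pair_block" "card U + c1 + c2 = k"
  using assms card_split_pair_block[OF _ assms(1), of S] finite_subset[of S "{1..n}"]
  by (auto simp: samples_def key_def)

lemma twin_class_card_ge:
  assumes "k \<le> r" "S0 \<in> samples k" "key z S0 = (U, c1, c2)" "12 * \<bar>real c1 - real c2\<bar> \<le> real w"
  shows "3/4 * real (card {S \<in> samples k. key z S = (U, c1, c2)})
           \<le> real (card {S \<in> samples k. key z' S = (U, c1, c2)})"
proof -
  have U: "U \<subseteq> {1..n} - pair_block" and k: "card U + c1 + c2 = k"
    using key_sampleD[of z, OF _ assms(2,3)] by simp_all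
  then have "c1 \<le> r" "c2 \<le> r" using assms(1) by auto
  from choose_swap_ratio_ge[OF block_sizes_pair w_ge_2 this assms(4)] show ?thesis
    using card_key_class[OF _ U k, of z] card_key_class[OF _ U k, of z', unfolded block_size_flip_pair]
    by simp
qed

lemma key_class_errors_ge:
  assumes "k \<le> r" and \<kappa>: "\<kappa> \<in> key z ` samples k"
  shows "3/4 * real (card {S \<in> samples k. balanced S \<and> key z S = \<kappa>})
           \<le> real (card {S \<in> errors g k z j. key z S = \<kappa>}) + real (card {S \<in> errors g k z' j. key z' S = \<kappa>})"
proof -
  obtain S0 where S0: "S0 \<in> samples k" "key z S0 = \<kappa>" using \<kappa> by blast
  obtain U c1 c2 where \<kappa>_eq: "\<kappa> = (U, c1, c2)" by (cases \<kappa>)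
  define X where "X = {S \<in> samples k. key z S = \<kappa>}"
  define Y where "Y = {S \<in> samples k. key z' S = \<kappa>}"
  have panel: "feature_panel y h w r S = feature_panel z h w r S0" if "y \<in> {z, z'}" "S \<in> samples k" "key y S = \<kappa>" for y S
    using that S0 by (intro feature_panel_eq_if_key_eq) (auto simp: samples_def)
  have good_le: "card {S \<in> samples k. balanced S \<and> key z S = \<kappa>} \<le> card X"
    unfolding X_def by (intro card_mono) auto
  show ?thesis
  proof (cases "g (feature_panel z h w r S0) j = z j")
    case False
    then have "{S \<in> errors g k z j. key z S = \<kappa>} = X"
      using panel[of z] by (auto simp: errors_def X_def)
    then show ?thesis using good_le by simp
  next
    case True
    have "z' j \<noteq> z j" using signvecs_cases[OF z_sign j_range] by (auto simp: flip_sign_def)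
    then have "{S \<in> errors g k z' j. key z' S = \<kappa>} = Y"
      using panel[of z'] True by (auto simp: errors_def Y_def)
    moreover have "3/4 * real (card {S \<in> samples k. balanced S \<and> key z S = \<kappa>})
                     \<le> real (card Y)"
    proof (cases "12 * \<bar>real c1 - real c2\<bar> \<le> real w")
      case True
      then have "3/4 * real (card X) \<le> real (card Y)"
        using twin_class_card_ge[OF assms(1) S0(1)] S0(2) unfolding X_def Y_def \<kappa>_eq by simp
      then show ?thesis using good_le by linarith
    next
      case False
      then have "{S \<in> samples k. balanced S \<and> key z S = \<kappa>} = {}"
        using imbalance_eq_if_key unfolding \<kappa>_eq by (auto simp: balanced_def)
      then show ?thesis by (simp only: card.empty of_nat_0 mult_zero_right of_nat_0_le_iff)
    qed
    ultimately show ?thesis by simp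
  qed
qed

lemma card_errors_pair_ge_balanced:
  assumes "k \<le> r"
  shows "3/4 * real (card {S \<in> samples k. balanced S})
           \<le> real (card (errors g k z j)) + real (card (errors g k z' j))"
proof -
  let ?K = "key z ` samples k"
  have fin: "finite ?K" by simp
  have fibres: "real (card A) = (\<Sum>\<kappa>\<in>?K. real (card {S \<in> A. key z S = \<kappa>}))"
    if "A \<subseteq> samples k" for A
  proof -
    have "card A = card {S \<in> A. key z S \<in> ?K}" using that by (intro arg_cong[where f = card]) blast
    also have "\<dots> = (\<Sum>\<kappa>\<in>?K. card {S \<in> A. key z S = \<kappa>})"
      using finite_subset[OF that] by (intro sum_card_fibres[symmetric] fin) simp
    finally show ?thesis by (simp add: of_nat_sum)
  qed
  have fin_errors: "finite (errors g k z' j)" by (simp add: errors_def)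
  have "(\<Sum>\<kappa>\<in>?K. card {S \<in> errors g k z' j. key z' S = \<kappa>}) = card {S \<in> errors g k z' j. key z' S \<in> ?K}"
    by (rule sum_card_fibres[OF fin fin_errors])
  also have "\<dots> \<le> card (errors g k z' j)" by (rule card_mono[OF fin_errors]) blast
  finally have errors'_ge:
    "(\<Sum>\<kappa>\<in>?K. real (card {S \<in> errors g k z' j. key z' S = \<kappa>})) \<le> real (card (errors g k z' j))"
    by (simp flip: of_nat_sum)
  have "errors g k z j \<subseteq> samples k" by (auto simp: errors_def)
  note errors_fibres = fibres[OF this]
  have "{S \<in> samples k. balanced S} \<subseteq> samples k" by blast
  note good_fibres = fibres[OF this]
  have "3/4 * real (card {S \<in> samples k. balanced S})
          = (\<Sum>\<kappa>\<in>?K. 3/4 * real (card {S \<in> samples k. balanced S \<and> key z S = \<kappa>}))"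
    unfolding good_fibres sum_distrib_left by (simp add: conj_assoc)
  also have "\<dots> \<le> (\<Sum>\<kappa>\<in>?K. real (card {S \<in> errors g k z j. key z S = \<kappa>})
                              + real (card {S \<in> errors g k z' j. key z' S = \<kappa>}))"
    by (intro sum_mono key_class_errors_ge assms)
  also have "\<dots> \<le> real (card (errors g k z j)) + real (card (errors g k z' j))"
    unfolding sum.distrib errors_fibres[symmetric] using errors'_ge by simp
  finally show ?thesis .
qed

definition weight :: "nat \<Rightarrow> real" where
  "weight i = of_bool (i \<in> odd_block z) - of_bool (i \<in> pair_block - odd_block z)"

lemma imbalance_eq_sum_weight: "finite S \<Longrightarrow> imbalance S = (\<Sum>i\<in>S. weight i)"
  by (simp add: imbalance_def weight_def sum_subtractf Int_def)

lemma sum_weight_square: "(\<Sum>i\<in>{1..n}. (weight i)\<^sup>2) = 2 * real r * real w"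
proof -
  have "(\<Sum>i\<in>{1..n}. (weight i)\<^sup>2) = (\<Sum>i\<in>{1..n}. of_bool (i \<in> pair_block))"
    using odd_block_subset[of z] by (intro sum.cong refl) (auto simp: weight_def)
  also have "\<dots> = real (card pair_block)"
    using pair_block_subset by (simp add: Int_absorb1 Int_def[symmetric])
  finally show ?thesis by (simp add: pair_block_def)
qed

lemma sum_weight: "(\<Sum>i\<in>{1..n}. weight i)\<^sup>2 = 4 * (real r)\<^sup>2"
proof -
  let ?a = "block_size z w r (2 * j - 1)" and ?b = "block_size z w r (2 * j)"
  have "(\<Sum>i\<in>{1..n}. weight i) = imbalance {1..n}"
    by (simp add: imbalance_eq_sum_weight)
  also have "\<dots> = real ?a - real ?b"
  proof -
    have "{1..n} \<inter> odd_block z = odd_block z" "{1..n} \<inter> (pair_block - odd_block z) = pair_block - odd_block z"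
      using odd_block_subset[of z] pair_block_subset by blast+
    then show ?thesis by (simp add: imbalance_def card_odd_block card_even_block)
  qed
  also have "\<bar>real ?a - real ?b\<bar> = 2 * real r"
  proof -
    consider "?a = r * (w - 1)" "?b = r * (w + 1)" | "?a = r * (w + 1)" "?b = r * (w - 1)"
      using block_sizes_pair by (auto simp: doubleton_eq_iff)
    then show ?thesis using w_ge_2 by cases (simp_all add: of_nat_diff algebra_simps)
  qed
  finally have "(\<Sum>i\<in>{1..n}. weight i)\<^sup>2 = (2 * real r)\<^sup>2" by (metis power2_abs)
  then show ?thesis by (simp add: power_mult_distrib)
qed

lemma sum_imbalance_square_le:
  shows "(\<Sum>S\<in>samples k. (imbalance S)\<^sup>2)
           \<le> real (n choose k) * (real k / real h + (real k)\<^sup>2 / ((real h)\<^sup>2 * (real w)\<^sup>2))"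
proof -
  have "(\<Sum>S\<in>samples k. (imbalance S)\<^sup>2) = (\<Sum>S\<in>samples k. (\<Sum>i\<in>S. weight i)\<^sup>2)"
    by (intro sum.cong refl) (auto simp: samples_def imbalance_eq_sum_weight finite_subset)
  also have "\<dots> \<le> real (n choose k) * (real k / real n * (2 * real r * real w) + (real k / real n)\<^sup>2 * (4 * (real r)\<^sup>2))"
    using sum_square_over_subsets_le[of "{1..n}" weight k]
    unfolding samples_def sum_weight_square sum_weight by simp
  also have "real k / real n * (2 * real r * real w) + (real k / real n)\<^sup>2 * (4 * (real r)\<^sup>2)
               = real k / real h + (real k)\<^sup>2 / ((real h)\<^sup>2 * (real w)\<^sup>2)"
    using j_range w_ge_2 r_pos by (simp add: n_def field_simps power2_eq_square)
  finally show ?thesis .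
qed

lemma card_unbalanced_le:
  assumes small: "1000 * real k < real h * (real w)\<^sup>2"
  shows "real (card {S \<in> samples k. \<not> balanced S}) \<le> 29/200 * real (n choose k)"
proof -
  let ?C = "real (n choose k)" and ?t = "real k / real h"
  have h_pos: "0 < real h" and w_pos: "0 < real w" using j_range w_ge_2 by auto
  have t_le: "?t \<le> (real w)\<^sup>2 / 1000" using small h_pos by (simp add: field_simps)
  then have "?t\<^sup>2 \<le> ((real w)\<^sup>2 / 1000)\<^sup>2" by (intro power_mono) auto
  then have "(real k)\<^sup>2 / ((real h)\<^sup>2 * (real w)\<^sup>2) \<le> (real w)\<^sup>2 / 1000000"
    using h_pos w_pos by (simp add: field_simps power2_eq_square)
  with t_le have moment: "?t + (real k)\<^sup>2 / ((real h)\<^sup>2 * (real w)\<^sup>2) \<le> (real w)\<^sup>2 * (1001 / 1000000)"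
    by linarith
  have "real (card {S \<in> samples k. real w / 12 < \<bar>imbalance S\<bar>}) * (real w / 12)\<^sup>2
          \<le> (\<Sum>S\<in>samples k. (imbalance S)\<^sup>2)"
    by (rule card_abs_gt_mult_square_le) auto
  also have "\<dots> \<le> ?C * ((real w)\<^sup>2 * (1001 / 1000000))"
    using order_trans[OF sum_imbalance_square_le mult_left_mono[OF moment of_nat_0_le_iff]] .
  finally have "real (card {S \<in> samples k. real w / 12 < \<bar>imbalance S\<bar>}) \<le> 144 * ?C * (1001 / 1000000)"
    using w_pos by (simp add: field_simps power2_eq_square)
  moreover have "{S \<in> samples k. real w / 12 < \<bar>imbalance S\<bar>} = {S \<in> samples k. \<not> balanced S}"
    by (auto simp: balanced_def)
  ultimately show ?thesis by simp
qed

lemma card_errors_pair_ge: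
  assumes "k \<le> r" "1000 * real k < real h * (real w)\<^sup>2"
  shows "16/25 * real (n choose k) \<le> real (card (errors g k z j)) + real (card (errors g k z' j))"
proof -
  have "171/200 * real (n choose k) \<le> real (card {S \<in> samples k. balanced S})"
    using card_unbalanced_le[OF assms(2)] card_samples_filter_split[of k balanced] by simp
  then show ?thesis using card_errors_pair_ge_balanced[OF assms(1), of g] by simp
qed

end

lemma averaging_over_bijections:
  fixes f :: "'z \<Rightarrow> 'j \<Rightarrow> real"
  assumes "finite Z" "Z \<noteq> {}"
    and bij: "\<And>j. j \<in> J \<Longrightarrow> bij_betw (\<sigma> j) Z Z"
    and pair: "\<And>z j. z \<in> Z \<Longrightarrow> j \<in> J \<Longrightarrow> \<alpha> \<le> f z j + f (\<sigma> j z) j"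
    and total: "\<And>z. z \<in> Z \<Longrightarrow> (\<Sum>j\<in>J. f z j) \<le> \<beta>"
  shows "real (card J) * \<alpha> \<le> 2 * \<beta>"
proof -
  have shifted: "(\<Sum>z\<in>Z. \<Sum>j\<in>J. f (\<sigma> j z) j) = (\<Sum>z\<in>Z. \<Sum>j\<in>J. f z j)"
    by (subst (1 2) sum.swap) (intro sum.cong refl sum.reindex_bij_betw bij)
  have "real (card Z) * (real (card J) * \<alpha>) = (\<Sum>z\<in>Z. \<Sum>j\<in>J. \<alpha>)" by simp
  also have "\<dots> \<le> (\<Sum>z\<in>Z. \<Sum>j\<in>J. f z j + f (\<sigma> j z) j)"
    by (intro sum_mono pair)
  also have "\<dots> = 2 * (\<Sum>z\<in>Z. \<Sum>j\<in>J. f z j)"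
    by (simp only: sum.distrib shifted)
  also have "\<dots> \<le> 2 * (\<Sum>z\<in>Z. \<beta>)"
    by (intro mult_left_mono sum_mono total) auto
  also have "\<dots> = real (card Z) * (2 * \<beta>)" by simp
  finally show ?thesis using assms(1,2) by (simp add: card_gt_0_iff)
qed

lemma choose_pos_if_unif_prob_ge:
  assumes "c \<le> unif_prob k n P" "0 < c"
  shows "0 < real (n choose k)"
proof -
  have "0 < unif_prob k n P" using assms by linarith
  then show ?thesis
    unfolding unif_prob_def zero_less_divide_iff by (metis of_nat_0_le_iff not_less)
qed

context camouflage
begin

lemma card_samples_not_le:
  assumes "p \<le> unif_prob k n P"
  shows "real (card {S \<in> samples k. \<not> P S}) \<le> (1 - p) * real (n choose k)"
proof -
  note split = card_samples_filter_split[of k P]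
  show ?thesis
  proof (cases "n choose k = 0")
    case False
    have "{S. S \<subseteq> {1..n} \<and> card S = k \<and> P S} = {S \<in> samples k. P S}" by (auto simp: samples_def)
    with assms False have "p * real (n choose k) \<le> real (card {S \<in> samples k. P S})"
      by (simp add: unif_prob_def le_divide_eq)
    with split show ?thesis by (simp add: algebra_simps)
  next
    case True
    moreover have "samples k = {}" using True card_samples finite_samples by (metis card_0_eq)
    ultimately show ?thesis by (simp del: binomial_eq_0_iff)
  qed
qed

lemma classifier_output_in_signvecs:
  assumes g: "\<forall>x. length x = k \<longrightarrow> set x \<subseteq> {1..2 * h} \<longrightarrow> g x \<in> signvecs h"
    and "z \<in> signvecs h" "S \<in> samples k"
  shows "g (feature_panel z h w r S) \<in> signvecs h"
proof -
  have "finite S" "S \<subseteq> {1..n}" "card S = k"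
    using assms(3) finite_subset by (auto simp: samples_def)
  then have "length (feature_panel z h w r S) = k" "set (feature_panel z h w r S) \<subseteq> {1..2 * h}"
    using feature_range[OF assms(2)] by (auto simp: feature_panel_def)
  then show ?thesis using g by blast
qed

lemma sum_card_errors_le:
  assumes g: "\<forall>x. length x = k \<longrightarrow> set x \<subseteq> {1..2 * h} \<longrightarrow> g x \<in> signvecs h"
    and z: "z \<in> signvecs h"
    and acc: "6/7 \<le> unif_prob k n
               (\<lambda>S. (\<Sum>j=1..h. \<bar>real_of_int (g (feature_panel z h w r S) j - z j)\<bar>) \<le> real h / 4)"
  shows "(\<Sum>j=1..h. real (card (errors g k z j))) \<le> 15/56 * real h * real (n choose k)"
proof -
  define mistakes where "mistakes S = card {j \<in> {1..h}. g (feature_panel z h w r S) j \<noteq> z j}" for S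
  define good where "good S \<longleftrightarrow> (\<Sum>j=1..h. \<bar>real_of_int (g (feature_panel z h w r S) j - z j)\<bar>) \<le> real h / 4"
    for S
  have mistakes_le: "real (mistakes S) \<le> real h / 8 + (if good S then 0 else real h)"
    if "S \<in> samples k" for S
  proof (cases "good S")
    case True
    from sum_abs_diff_signvecs[OF classifier_output_in_signvecs[OF g z that] z] True
    show ?thesis by (simp add: good_def mistakes_def)
  next
    case False
    have "mistakes S \<le> card {1..h}" unfolding mistakes_def by (intro card_mono) auto
    with False show ?thesis by simp
  qed
  have "(\<Sum>j=1..h. real (card (errors g k z j))) = (\<Sum>S\<in>samples k. real (mistakes S))"
    using sum_card_filter_swap[of "samples k" "{1..h}" "\<lambda>S j. g (feature_panel z h w r S) j \<noteq> z j"]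
    by (simp add: errors_def mistakes_def flip: of_nat_sum)
  also have "\<dots> \<le> (\<Sum>S\<in>samples k. real h / 8 + (if good S then 0 else real h))"
    by (intro sum_mono mistakes_le)
  also have "\<dots> = real (n choose k) * (real h / 8) + real (card {S \<in> samples k. \<not> good S}) * real h"
    by (simp add: sum.distrib sum.If_cases card_samples Int_def)
  also have "\<dots> \<le> 15/56 * real h * real (n choose k)"
    using mult_right_mono[OF card_samples_not_le[OF acc[folded good_def]], of "real h"]
    by (simp add: algebra_simps)
  finally show ?thesis .
qed

lemma sample_size_lower_bound:
  assumes h: "1 \<le> h" and k: "k \<le> r"
    and g: "\<forall>x. length x = k \<longrightarrow> set x \<subseteq> {1..2 * h} \<longrightarrow> g x \<in> signvecs h"
    and acc: "\<forall>z \<in> signvecs h. 6/7 \<le> unif_prob k n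
               (\<lambda>S. (\<Sum>j=1..h. \<bar>real_of_int (g (feature_panel z h w r S) j - z j)\<bar>) \<le> real h / 4)"
  shows "real h * (real w)\<^sup>2 \<le> 1000 * real k"
proof (rule ccontr)
  assume "\<not> ?thesis"
  then have small: "1000 * real k < real h * (real w)\<^sup>2" by simp
  let ?C = "real (n choose k)"
  have ones: "(\<lambda>i\<in>{1..h}. 1) \<in> signvecs h" by (simp add: signvecs_def)
  have "real (card {1..h}) * (16/25 * ?C) \<le> 2 * (15/56 * real h * ?C)"
  proof (rule averaging_over_bijections[where \<sigma> = flip_sign and Z = "signvecs h"])
    show "finite (signvecs h)" by (simp add: signvecs_def finite_PiE)
    show "signvecs h \<noteq> {}" using ones by blast
    show "16/25 * ?C \<le> real (card (errors g k z j)) + real (card (errors g k (flip_sign j z) j))"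
      if "z \<in> signvecs h" "j \<in> {1..h}" for z j
    proof -
      interpret flip_pair h w r z j by unfold_locales (use that in auto)
      show ?thesis using card_errors_pair_ge[OF k small] .
    qed
  qed (use bij_betw_flip_sign sum_card_errors_le[OF g] acc in auto)
  moreover have "0 < ?C" using choose_pos_if_unif_prob_ge acc ones by fastforce
  ultimately show False using h by (simp add: field_simps)
qed

end

theorem lemma2p8:
  shows "\<exists>c::real. c > 0 \<and>
    (\<forall>h w :: nat. h \<ge> 2 \<longrightarrow> w \<ge> 2 \<longrightarrow>
      (\<exists>r::nat. r \<ge> 1 \<and>
        (\<forall>(k::nat) (g :: nat list \<Rightarrow> nat \<Rightarrow> int).
           k \<ge> 1 \<longrightarrow>
           (\<forall>x. length x = k \<longrightarrow> set x \<subseteq> {1..2*h} \<longrightarrow> g x \<in> signvecs h) \<longrightarrow>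
           (\<forall>z \<in> signvecs h.
              unif_prob k (2*h*w*r)
                (\<lambda>S. (\<Sum>j=1..h. \<bar>real_of_int (g (feature_panel z h w r S) j - z j)\<bar>) \<le> real h / 4)
              \<ge> 6/7) \<longrightarrow>
           real k \<ge> c * real h * real w ^ 2)))"
proof -
  have bound: "1/1000 * real h * real w ^ 2 \<le> real k"
    if hw: "2 \<le> h" "2 \<le> w"
      and g: "\<forall>x. length x = k \<longrightarrow> set x \<subseteq> {1..2*h} \<longrightarrow> g x \<in> signvecs h"
      and acc: "\<forall>z \<in> signvecs h. unif_prob k (2*h*w*(h*w\<^sup>2))
                 (\<lambda>S. (\<Sum>j=1..h. \<bar>real_of_int (g (feature_panel z h w (h*w\<^sup>2) S) j - z j)\<bar>) \<le> real h / 4)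
               \<ge> 6/7"
    for h w k :: nat and g :: "nat list \<Rightarrow> nat \<Rightarrow> int"
  \<comment> \<open>\<open>r = h w\<^sup>2\<close> makes \<open>k \<le> r\<close>, as needed for the binomial ratio estimate, whenever \<open>k\<close> is
    below the claimed bound.\<close>
  proof (cases "k \<le> h * w\<^sup>2")
    case True
    interpret camouflage h w "h * w\<^sup>2" using hw by unfold_locales simp_all
    show ?thesis using sample_size_lower_bound[OF _ True g] acc hw by (simp add: n_def)
  next
    case False
    then have "real h * real w ^ 2 \<le> real k" by (metis nat_le_linear not_le of_nat_le_iff of_nat_mult of_nat_power)
    then show ?thesis by simp
  qed
  have "1 \<le> h * w\<^sup>2" if "2 \<le> h" "2 \<le> w" for h w :: nat using that by simp
  with bound show ?thesis by (intro exI[of _ "1/1000"] conjI) (simp, blast)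
qed

end
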